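(* Let $r,d:[0,\infty)\to\mathbb{R}$ be Lipschitz continuous functions satisfying $r(0)>d(0)>0$, $r'<0$, $r(+\infty)=0$ and $d'>0$. Let $n_C^0\ge 0$ be an integrable function on $[0,\infty)$ which is positive on a neighbourhood of $x=0$, and let $n_C(x,t)$ be the solution of $$\frac{\partial}{\partial t} n_C(x,t)=\big[r(x)-d(x)\big]\,n_C(x,t),\qquad x\ge 0,\ t>0,\qquad n_C(x,0)=n_C^0(x)$$ (i.e. the cancer-cell model with no therapy, $c(t)\equiv 0$, and no mutations, $\theta_C=0$). Set $\rho_C(t)=\int_0^\infty n_C(x,t)\,dx$. Then $\rho_C(t)\to\infty$ as $t\to\infty$ with an exponential rate (there exist $\lambda>0$ and $C>0$ with $\rho_C(t)\ge Ce^{\lambda t}$ for all $t\ge0$), and $$\frac{n_C(\cdot,t)}{\rho_C(t)}\longrightarrow \delta(x)\quad\text{as } t\to\infty,$$ weakly in the sense of measures.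
   Context: $n_C(x,t)$ is the density of cancer cells with resistance-gene expression level $x\in[0,\infty)$ at time $t$; $r$ is the reproduction rate and $d$ the death rate; $\delta(x)$ is the Dirac mass at $x=0$. *)

theory Defs
  imports "HOL-Analysis.Analysis"
begin

definition rho_C :: "(real \<Rightarrow> real \<Rightarrow> real) \<Rightarrow> real \<Rightarrow> real" where
  "rho_C n t = (LINT x:{0..}|lborel. n x t)"

end

theory Submission
  imports Defs
begin

text \<open>Without mutations each trait \<open>x\<close> evolves independently, so
  \<open>n(x,t) = n0(x) exp(a(x) t)\<close> with \<open>a = r - d\<close> strictly decreasing and \<open>a(0) > 0\<close>.
  The mass on \<open>[0,\<eta>]\<close> grows at least like \<open>exp(a(\<eta>) t)\<close>, a positive rate for small
  \<open>\<eta> > 0\<close>, whereas the mass beyond \<open>\<delta> > \<eta>\<close> grows at most like \<open>exp(a(\<delta>) t)\<close>,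
  a strictly smaller rate. After normalisation the mass away from \<open>0\<close> therefore vanishes,
  and only the values of a test function near \<open>0\<close> survive.\<close>

lemma linear_ode_solution_atLeast:
  fixes f :: "real \<Rightarrow> real"
  assumes ode: "\<And>s. c \<le> s \<Longrightarrow> (f has_real_derivative a * f s) (at s within {c..})"
    and "c \<le> t"
  shows "f t = f c * exp (a * (t - c))"
proof -
  define g where "g s = f s * exp (- a * (s - c))" for s
  have "\<exists>k. \<forall>s\<in>{c..}. g s = k"
  proof (rule has_field_derivative_zero_constant)
    fix s assume "s \<in> {c..}"
    then have "(g has_real_derivative a * f s * exp (- a * (s - c)) + f s * (exp (- a * (s - c)) * (- a)))
        (at s within {c..})"
      unfolding g_def using ode by (auto intro!: derivative_eq_intros)
    then show "(g has_real_derivative 0) (at s within {c..})"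
      by (simp add: algebra_simps)
  qed simp
  then have "g t = g c" using \<open>c \<le> t\<close> by auto
  then show ?thesis
    unfolding g_def by (simp add: exp_diff field_simps)
qed

lemma continuous_on_if_has_real_derivative_within:
  assumes "\<And>x. x \<in> S \<Longrightarrow> \<exists>D. (f has_real_derivative D) (at x within S)"
  shows "continuous_on S f"
  using assms DERIV_continuous unfolding continuous_on_eq_continuous_within by blast

lemma DERIV_within_neg_imp_decreasing_atLeast:
  fixes f :: "real \<Rightarrow> real"
  assumes deriv: "\<And>x. c \<le> x \<Longrightarrow> \<exists>D. (f has_real_derivative D) (at x within {c..}) \<and> D < 0"
    and "c \<le> x" "x < y"
  shows "f y < f x"
proof (rule DERIV_neg_imp_decreasing_open[OF \<open>x < y\<close>])
  fix z assume z: "x < z" "z < y"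
  then have "c \<le> z" using \<open>c \<le> x\<close> by simp
  then obtain D where "(f has_real_derivative D) (at z within {c..})" "D < 0"
    using deriv by blast
  moreover have "at z within {c..} = at z"
    using z \<open>c \<le> x\<close> by (intro at_within_interior) simp
  ultimately show "\<exists>D. DERIV f z :> D \<and> D < 0" by auto
next
  have "continuous_on {c..} f"
    using deriv by (intro continuous_on_if_has_real_derivative_within) auto
  then show "continuous_on {x..y} f"
    by (rule continuous_on_subset) (use \<open>c \<le> x\<close> in auto)
qed

lemma DERIV_within_signs_imp_diff_decreasing_atLeast:
  fixes f g :: "real \<Rightarrow> real"
  assumes f: "\<And>x. c \<le> x \<Longrightarrow> \<exists>D. (f has_real_derivative D) (at x within {c..}) \<and> D < 0"
    and g: "\<And>x. c \<le> x \<Longrightarrow> \<exists>D. (g has_real_derivative D) (at x within {c..}) \<and> 0 < D"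
    and "c \<le> x" "x < y"
  shows "f y - g y < f x - g x"
proof -
  have "\<exists>D. ((\<lambda>x. - g x) has_real_derivative D) (at x within {c..}) \<and> D < 0" if "c \<le> x" for x
    using g[OF that] by (metis DERIV_minus neg_less_0_iff_less)
  then show ?thesis
    using DERIV_within_neg_imp_decreasing_atLeast[OF f \<open>c \<le> x\<close> \<open>x < y\<close>]
      DERIV_within_neg_imp_decreasing_atLeast[of c "\<lambda>x. - g x", OF _ \<open>c \<le> x\<close> \<open>x < y\<close>]
    by force
qed

lemma set_integrable_mult_bounded_continuous:
  fixes f g :: "real \<Rightarrow> real"
  assumes f: "set_integrable lborel S f" and S: "S \<in> sets borel"
    and g: "continuous_on S g" and bound: "\<And>x. x \<in> S \<Longrightarrow> \<bar>g x\<bar> \<le> B"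
  shows "set_integrable lborel S (\<lambda>x. g x * f x)"
proof (rule set_integrable_bound[where f="\<lambda>x. B * f x"])
  show "set_integrable lborel S (\<lambda>x. B * f x)"
    using f by simp
  have "(\<lambda>x. indicator S x *\<^sub>R f x) \<in> borel_measurable lborel"
    using f unfolding set_integrable_def by (rule borel_measurable_integrable)
  moreover have "(\<lambda>x. indicator S x *\<^sub>R g x) \<in> borel_measurable borel"
    using set_measurable_continuous_on[OF S g] unfolding set_borel_measurable_def .
  moreover have "(\<lambda>x. indicator S x *\<^sub>R (g x * f x))
      = (\<lambda>x. (indicator S x *\<^sub>R g x) * (indicator S x *\<^sub>R f x))"
    by (auto simp: indicator_def)
  ultimately show "set_borel_measurable lborel S (\<lambda>x. g x * f x)"
    unfolding set_borel_measurable_def by simp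
  show "AE x in lborel. x \<in> S \<longrightarrow> norm (g x * f x) \<le> norm (B * f x)"
  proof (intro AE_I2 impI)
    fix x assume "x \<in> S"
    then have "\<bar>g x\<bar> \<le> \<bar>B\<bar>" using bound by force
    then show "norm (g x * f x) \<le> norm (B * f x)"
      by (simp add: abs_mult mult_right_mono)
  qed
qed

lemma set_integral_pos_if_pos_on_interval:
  fixes f :: "real \<Rightarrow> real"
  assumes f: "set_integrable lborel {u..v} f" and "u < v"
    and pos: "\<And>x. u \<le> x \<Longrightarrow> x \<le> v \<Longrightarrow> 0 < f x"
  shows "0 < (LINT x:{u..v}|lborel. f x)"
proof -
  have "0 \<le> (LINT x:{u..v}|lborel. f x)"
    unfolding set_lebesgue_integral_def using pos
    by (intro integral_nonneg_AE AE_I2) (simp add: indicator_def less_imp_le)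
  moreover have "(LINT x:{u..v}|lborel. f x) \<noteq> 0"
  proof
    assume "(LINT x:{u..v}|lborel. f x) = 0"
    then have "(LINT x:{u..v}|lborel. indicator {u..v} x *\<^sub>R f x) = 0"
      by (subst set_lebesgue_integral_cong[where g=f]) auto
    with f pos have "{u..v} \<in> null_sets lborel"
      by (intro null_if_pos_func_has_zero_int[of lborel "\<lambda>x. indicator {u..v} x *\<^sub>R f x"])
        (auto simp: set_integrable_def)
    then show False
      using \<open>u < v\<close> by (simp add: null_sets_def)
  qed
  ultimately show ?thesis by simp
qed

lemma set_integral_mono_subset_nonneg:
  fixes f :: "'a \<Rightarrow> real"
  assumes "set_integrable M B f" "A \<subseteq> B" "A \<in> sets M" "\<And>x. x \<in> B \<Longrightarrow> 0 \<le> f x"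
  shows "(LINT x:A|M. f x) \<le> (LINT x:B|M. f x)"
proof -
  have "set_integrable M A f"
    using assms(1,3,2) by (rule set_integrable_subset)
  with assms show ?thesis
    unfolding set_integrable_def set_lebesgue_integral_def
    by (intro integral_mono) (auto simp: indicator_def)
qed

locale exp_tilted_mass =
  fixes n0 a :: "real \<Rightarrow> real"
  assumes n0_nonneg: "\<And>x. 0 \<le> x \<Longrightarrow> 0 \<le> n0 x"
    and n0_integrable: "set_integrable lborel {0..} n0"
    and n0_pos_near_0: "\<exists>\<epsilon>>0. \<forall>x. 0 \<le> x \<and> x < \<epsilon> \<longrightarrow> 0 < n0 x"
    and a_continuous: "continuous_on {0..} a"
    and a_decreasing: "\<And>x y. 0 \<le> x \<Longrightarrow> x < y \<Longrightarrow> a y < a x"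
begin

definition mass :: "real \<Rightarrow> real" where
  "mass t = (LINT x:{0..}|lborel. n0 x * exp (a x * t))"

lemma a_antimono: "0 \<le> x \<Longrightarrow> x \<le> y \<Longrightarrow> a y \<le> a x"
  using a_decreasing[of x y] by (cases "x = y") auto

lemma exp_tilt_le: "0 \<le> x \<Longrightarrow> 0 \<le> t \<Longrightarrow> exp (a x * t) \<le> exp (a 0 * t)"
  using a_antimono[of 0 x] by (simp add: mult_right_mono)

lemma tilted_integrable:
  assumes "continuous_on {0..} g" "\<And>x. 0 \<le> x \<Longrightarrow> \<bar>g x\<bar> \<le> B" "0 \<le> t"
  shows "set_integrable lborel {0..} (\<lambda>x. g x * (n0 x * exp (a x * t)))"
proof -
  have "set_integrable lborel {0..} (\<lambda>x. (g x * exp (a x * t)) * n0 x)"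
  proof (rule set_integrable_mult_bounded_continuous[OF n0_integrable])
    show "continuous_on {0..} (\<lambda>x. g x * exp (a x * t))"
      by (intro continuous_intros assms(1) a_continuous)
    show "\<bar>g x * exp (a x * t)\<bar> \<le> B * exp (a 0 * t)" if "x \<in> {0..}" for x
    proof -
      have "\<bar>g x\<bar> \<le> B" "exp (a x * t) \<le> exp (a 0 * t)"
        using assms(2,3) exp_tilt_le that by auto
      then show ?thesis
        by (simp add: abs_mult mult_mono)
    qed
  qed simp
  then show ?thesis by (simp add: mult_ac)
qed

lemma mass_integrable: "0 \<le> t \<Longrightarrow> set_integrable lborel {0..} (\<lambda>x. n0 x * exp (a x * t))"
  using tilted_integrable[of "\<lambda>_. 1" 1 t] by simp

lemma mass_ge_interval_integral:
  assumes "0 \<le> t" "0 \<le> \<eta>"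
  shows "(LINT x:{0..\<eta>}|lborel. n0 x) * exp (a \<eta> * t) \<le> mass t"
proof -
  have "(LINT x:{0..\<eta>}|lborel. n0 x) * exp (a \<eta> * t) = (LINT x:{0..\<eta>}|lborel. n0 x * exp (a \<eta> * t))"
    by simp
  also have "\<dots> \<le> (LINT x:{0..\<eta>}|lborel. n0 x * exp (a x * t))"
  proof (rule set_integral_mono)
    show "set_integrable lborel {0..\<eta>} (\<lambda>x. n0 x * exp (a \<eta> * t))"
      using set_integrable_subset[OF n0_integrable, of "{0..\<eta>}"] by auto
    show "set_integrable lborel {0..\<eta>} (\<lambda>x. n0 x * exp (a x * t))"
      using set_integrable_subset[OF mass_integrable[OF \<open>0 \<le> t\<close>], of "{0..\<eta>}"] by auto
    show "n0 x * exp (a \<eta> * t) \<le> n0 x * exp (a x * t)" if "x \<in> {0..\<eta>}" for x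
      using a_antimono[of x \<eta>] n0_nonneg[of x] \<open>0 \<le> t\<close> that
      by (auto intro!: mult_left_mono mult_right_mono)
  qed
  also have "\<dots> \<le> mass t"
    unfolding mass_def using mass_integrable[OF \<open>0 \<le> t\<close>] n0_nonneg
    by (intro set_integral_mono_subset_nonneg) auto
  finally show ?thesis .
qed

lemma eventually_mass_exp_lower_bound:
  "\<forall>\<^sub>F \<eta> in at_right 0. \<exists>c>0. \<forall>t\<ge>0. c * exp (a \<eta> * t) \<le> mass t"
proof -
  obtain \<epsilon> where "0 < \<epsilon>" and pos: "\<And>x. 0 \<le> x \<Longrightarrow> x < \<epsilon> \<Longrightarrow> 0 < n0 x"
    using n0_pos_near_0 by auto
  have "\<exists>c>0. \<forall>t\<ge>0. c * exp (a \<eta> * t) \<le> mass t" if "0 < \<eta>" "\<eta> < \<epsilon>" for \<eta>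
  proof (intro exI conjI allI impI)
    show "0 < (LINT x:{0..\<eta>}|lborel. n0 x)"
      using that pos set_integrable_subset[OF n0_integrable, of "{0..\<eta>}"]
      by (intro set_integral_pos_if_pos_on_interval) auto
    show "(LINT x:{0..\<eta>}|lborel. n0 x) * exp (a \<eta> * t) \<le> mass t" if "0 \<le> t" for t
      using mass_ge_interval_integral \<open>0 < \<eta>\<close> that by simp
  qed
  then show ?thesis
    unfolding eventually_at_right_field using \<open>0 < \<epsilon>\<close> by auto
qed

lemma mass_pos: "0 \<le> t \<Longrightarrow> 0 < mass t"
  using eventually_happens'[OF trivial_limit_at_right_real eventually_mass_exp_lower_bound]
  by (meson exp_gt_zero less_le_trans mult_pos_pos)

lemma eventually_a_pos_at_right_0:
  assumes "0 < a 0"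
  shows "\<forall>\<^sub>F \<eta> in at_right 0. 0 < a \<eta>"
proof -
  have "(a \<longlongrightarrow> a 0) (at 0 within {0..})"
    using a_continuous by (simp add: continuous_on_def)
  then have "(a \<longlongrightarrow> a 0) (at_right 0)"
    by (rule tendsto_within_subset) auto
  then show ?thesis
    using assms by (rule order_tendstoD)
qed

lemma mass_exp_growth:
  assumes "0 < a 0"
  shows "\<exists>lam>0. \<exists>C>0. \<forall>t\<ge>0. C * exp (lam * t) \<le> mass t"
  using eventually_happens'[OF trivial_limit_at_right_real
      eventually_conj[OF eventually_a_pos_at_right_0[OF assms] eventually_mass_exp_lower_bound]]
  by blast

lemma mass_tendsto_at_top:
  assumes "0 < a 0"
  shows "filterlim mass at_top at_top"
proof -
  obtain lam C where "0 < lam" "0 < C" and bound: "\<And>t. 0 \<le> t \<Longrightarrow> C * exp (lam * t) \<le> mass t"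
    using mass_exp_growth[OF assms] by blast
  have "filterlim (\<lambda>t. lam * t) at_top at_top"
    using filterlim_tendsto_pos_mult_at_top[OF tendsto_const \<open>0 < lam\<close> filterlim_ident] .
  then have "filterlim (\<lambda>t. C * exp (lam * t)) at_top at_top"
    using filterlim_tendsto_pos_mult_at_top[OF tendsto_const \<open>0 < C\<close>]
      filterlim_compose[OF exp_at_top] by blast
  then show ?thesis
    by (rule filterlim_at_top_mono) (use eventually_ge_at_top[of 0] bound in \<open>rule eventually_mono\<close>)
qed

lemma tilted_deviation_pointwise:
  assumes B: "\<And>x. 0 \<le> x \<Longrightarrow> \<bar>\<phi> x\<bar> \<le> B"
    and near: "\<And>x. 0 \<le> x \<Longrightarrow> x < \<delta> \<Longrightarrow> \<bar>\<phi> x - \<phi> 0\<bar> \<le> e"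
    and "0 \<le> \<delta>" "0 \<le> e" "0 \<le> t" "0 \<le> x"
  shows "\<bar>(\<phi> x - \<phi> 0) * (n0 x * exp (a x * t))\<bar>
    \<le> e * (n0 x * exp (a x * t)) + 2 * B * exp (a \<delta> * t) * n0 x"
proof -
  define w where "w = n0 x * exp (a x * t)"
  have "0 \<le> w" "0 \<le> n0 x" "0 \<le> B"
    unfolding w_def using n0_nonneg[OF \<open>0 \<le> x\<close>] B[of 0] by auto
  show ?thesis
    unfolding w_def[symmetric] abs_mult abs_of_nonneg[OF \<open>0 \<le> w\<close>]
  proof (cases "x < \<delta>")
    case True
    then have "\<bar>\<phi> x - \<phi> 0\<bar> * w \<le> e * w"
      using near[OF \<open>0 \<le> x\<close>] \<open>0 \<le> w\<close> by (simp add: mult_right_mono)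
    moreover have "0 \<le> 2 * B * exp (a \<delta> * t) * n0 x"
      using \<open>0 \<le> n0 x\<close> \<open>0 \<le> B\<close> by simp
    ultimately show "\<bar>\<phi> x - \<phi> 0\<bar> * w \<le> e * w + 2 * B * exp (a \<delta> * t) * n0 x"
      by linarith
  next
    case False
    have "\<bar>\<phi> x - \<phi> 0\<bar> \<le> 2 * B"
      using B[OF \<open>0 \<le> x\<close>] B[of 0] by linarith
    moreover have "w \<le> exp (a \<delta> * t) * n0 x"
      unfolding w_def using a_antimono[of \<delta> x] False \<open>0 \<le> \<delta>\<close> \<open>0 \<le> t\<close> \<open>0 \<le> n0 x\<close>
      by (simp add: mult.commute mult_left_mono mult_right_mono)
    ultimately have "\<bar>\<phi> x - \<phi> 0\<bar> * w \<le> 2 * B * (exp (a \<delta> * t) * n0 x)"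
      using \<open>0 \<le> w\<close> by (intro mult_mono) auto
    moreover have "0 \<le> e * w"
      using \<open>0 \<le> e\<close> \<open>0 \<le> w\<close> by simp
    ultimately show "\<bar>\<phi> x - \<phi> 0\<bar> * w \<le> e * w + 2 * B * exp (a \<delta> * t) * n0 x"
      by (simp add: mult.assoc)
  qed
qed

lemma tilted_deviation_bound:
  assumes \<phi>: "continuous_on {0..} \<phi>" and B: "\<And>x. 0 \<le> x \<Longrightarrow> \<bar>\<phi> x\<bar> \<le> B"
    and near: "\<And>x. 0 \<le> x \<Longrightarrow> x < \<delta> \<Longrightarrow> \<bar>\<phi> x - \<phi> 0\<bar> \<le> e"
    and "0 \<le> \<delta>" "0 \<le> e" "0 \<le> t"
  shows "\<bar>(LINT x:{0..}|lborel. \<phi> x * (n0 x * exp (a x * t))) - \<phi> 0 * mass t\<bar>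
    \<le> e * mass t + 2 * B * exp (a \<delta> * t) * (LINT x:{0..}|lborel. n0 x)"
proof -
  define w where "w x = n0 x * exp (a x * t)" for x
  have int_\<phi>w: "set_integrable lborel {0..} (\<lambda>x. \<phi> x * w x)"
    unfolding w_def using tilted_integrable[OF \<phi> B \<open>0 \<le> t\<close>] .
  have int_w: "set_integrable lborel {0..} w"
    unfolding w_def using mass_integrable[OF \<open>0 \<le> t\<close>] .
  have int_dev: "set_integrable lborel {0..} (\<lambda>x. (\<phi> x - \<phi> 0) * w x)"
    using set_integral_diff(1)[OF int_\<phi>w set_integrable_mult_right[OF int_w, of "\<phi> 0"]]
    by (simp add: left_diff_distrib)
  have "(LINT x:{0..}|lborel. \<phi> x * w x) - \<phi> 0 * mass t = (LINT x:{0..}|lborel. (\<phi> x - \<phi> 0) * w x)"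
    unfolding mass_def w_def[symmetric] left_diff_distrib
    using set_integral_diff(2)[OF int_\<phi>w set_integrable_mult_right[OF int_w, of "\<phi> 0"]]
    by simp
  also have "\<bar>\<dots>\<bar> \<le> (LINT x:{0..}|lborel. \<bar>(\<phi> x - \<phi> 0) * w x\<bar>)"
    using set_integral_norm_bound[OF int_dev] by simp
  also have "\<dots> \<le> (LINT x:{0..}|lborel. e * w x + 2 * B * exp (a \<delta> * t) * n0 x)"
    using set_integrable_norm[OF int_dev] int_w n0_integrable
      tilted_deviation_pointwise[where \<phi>=\<phi>, OF B near \<open>0 \<le> \<delta>\<close> \<open>0 \<le> e\<close> \<open>0 \<le> t\<close>]
    unfolding w_def by (intro set_integral_mono) auto
  also have "\<dots> = e * mass t + 2 * B * exp (a \<delta> * t) * (LINT x:{0..}|lborel. n0 x)"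
    using int_w n0_integrable unfolding mass_def w_def by simp
  finally show ?thesis
    unfolding w_def .
qed

lemma normalized_tilted_deviation_bound:
  assumes \<phi>: "continuous_on {0..} \<phi>" and B: "\<And>x. 0 \<le> x \<Longrightarrow> \<bar>\<phi> x\<bar> \<le> B"
    and near: "\<And>x. 0 \<le> x \<Longrightarrow> x < \<delta> \<Longrightarrow> \<bar>\<phi> x - \<phi> 0\<bar> \<le> e"
    and "0 \<le> \<delta>" "0 \<le> e" "0 \<le> t" "0 < c" and lower: "c * exp (a \<eta> * t) \<le> mass t"
  shows "\<bar>(LINT x:{0..}|lborel. \<phi> x * (n0 x * exp (a x * t))) / mass t - \<phi> 0\<bar>
    \<le> e + 2 * B * (LINT x:{0..}|lborel. n0 x) / c * exp ((a \<delta> - a \<eta>) * t)"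
proof -
  define I where "I = (LINT x:{0..}|lborel. \<phi> x * (n0 x * exp (a x * t)))"
  define M where "M = (LINT x:{0..}|lborel. n0 x)"
  have "0 < mass t" "0 \<le> B"
    using mass_pos \<open>0 \<le> t\<close> B[of 0] by auto
  have "0 \<le> M"
    unfolding M_def set_lebesgue_integral_def using n0_nonneg
    by (intro integral_nonneg_AE AE_I2) (simp add: indicator_def)
  have "\<bar>I / mass t - \<phi> 0\<bar> = \<bar>I - \<phi> 0 * mass t\<bar> / mass t"
    using \<open>0 < mass t\<close> by (simp add: field_simps)
  also have "\<dots> \<le> (e * mass t + 2 * B * exp (a \<delta> * t) * M) / mass t"
    unfolding I_def M_def using \<open>0 < mass t\<close>
    by (intro divide_right_mono tilted_deviation_bound[OF \<phi> B near]) (use assms in auto)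
  also have "\<dots> = e + 2 * B * M * exp (a \<delta> * t) / mass t"
    using \<open>0 < mass t\<close> by (simp add: field_simps)
  also have "\<dots> \<le> e + 2 * B * M * exp (a \<delta> * t) / (c * exp (a \<eta> * t))"
    using lower \<open>0 < c\<close> \<open>0 \<le> B\<close> \<open>0 \<le> M\<close> \<open>0 < mass t\<close>
    by (intro add_left_mono divide_left_mono) auto
  also have "\<dots> = e + 2 * B * M / c * exp ((a \<delta> - a \<eta>) * t)"
    unfolding left_diff_distrib exp_diff by simp
  finally show ?thesis
    unfolding I_def M_def .
qed

lemma normalized_tilted_mass_tendsto:
  assumes \<phi>: "continuous_on {0..} \<phi>" and "bounded (\<phi> ` {0..})"
  shows "((\<lambda>t. (LINT x:{0..}|lborel. \<phi> x * (n0 x * exp (a x * t))) / mass t) \<longlongrightarrow> \<phi> 0) at_top"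
proof (rule tendstoI)
  fix e :: real assume "0 < e"
  obtain B where B: "\<And>x. 0 \<le> x \<Longrightarrow> \<bar>\<phi> x\<bar> \<le> B"
    using \<open>bounded (\<phi> ` {0..})\<close> unfolding bounded_iff by auto
  obtain \<delta> where "0 < \<delta>" and near: "\<And>x. 0 \<le> x \<Longrightarrow> x < \<delta> \<Longrightarrow> \<bar>\<phi> x - \<phi> 0\<bar> \<le> e / 2"
    using \<phi> \<open>0 < e\<close> unfolding continuous_on_iff
    by (metis atLeast_iff dist_real_def half_gt_zero less_eq_real_def order_refl diff_0_right abs_of_nonneg)
  have "\<forall>\<^sub>F \<eta> in at_right 0. \<eta> < \<delta>"
    unfolding eventually_at_right_field using \<open>0 < \<delta>\<close> by blast
  then obtain \<eta> c where "0 < \<eta>" "\<eta> < \<delta>" "0 < c" and lower: "\<And>t. 0 \<le> t \<Longrightarrow> c * exp (a \<eta> * t) \<le> mass t"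
    using eventually_happens'[OF trivial_limit_at_right_real
        eventually_conj[OF eventually_at_right_less eventually_conj[OF _ eventually_mass_exp_lower_bound]]]
    by blast
  define K where "K = 2 * B * (LINT x:{0..}|lborel. n0 x) / c"
  have "a \<delta> - a \<eta> < 0"
    using a_decreasing[of \<eta> \<delta>] \<open>0 < \<eta>\<close> \<open>\<eta> < \<delta>\<close> by simp
  then have "filterlim (\<lambda>t. (a \<delta> - a \<eta>) * t) at_bot at_top"
    by (rule filterlim_tendsto_neg_mult_at_bot[OF tendsto_const _ filterlim_ident])
  then have "((\<lambda>t. K * exp ((a \<delta> - a \<eta>) * t)) \<longlongrightarrow> 0) at_top"
    by (intro tendsto_mult_right_zero filterlim_compose[OF exp_at_bot])
  then have "\<forall>\<^sub>F t in at_top. K * exp ((a \<delta> - a \<eta>) * t) < e / 2"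
    using \<open>0 < e\<close> by (intro order_tendstoD(2)) auto
  then show "\<forall>\<^sub>F t in at_top. dist ((LINT x:{0..}|lborel. \<phi> x * (n0 x * exp (a x * t))) / mass t) (\<phi> 0) < e"
    using eventually_ge_at_top[of 0]
  proof eventually_elim
    case (elim t)
    then show ?case
      using normalized_tilted_deviation_bound[OF \<phi> B near _ _ _ \<open>0 < c\<close> lower] \<open>0 < \<delta>\<close> \<open>0 < e\<close>
      unfolding dist_real_def K_def by fastforce
  qed
qed

end

theorem lemma2p2:
  fixes r d n0 :: "real \<Rightarrow> real" and n :: "real \<Rightarrow> real \<Rightarrow> real"
  assumes r_lip: "\<exists>L. L-lipschitz_on {0..} r"
    and d_lip: "\<exists>L. L-lipschitz_on {0..} d"
    and r0_d0: "r 0 > d 0" "d 0 > 0"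
    and r_deriv: "\<forall>x\<ge>0. \<exists>D. (r has_real_derivative D) (at x within {0..}) \<and> D < 0"
    and r_infty: "(r \<longlongrightarrow> 0) at_top"
    and d_deriv: "\<forall>x\<ge>0. \<exists>D. (d has_real_derivative D) (at x within {0..}) \<and> D > 0"
    and n0_nonneg: "\<forall>x\<ge>0. n0 x \<ge> 0"
    and n0_int: "set_integrable lborel {0..} n0"
    and n0_pos: "\<exists>\<epsilon>>0. \<forall>x. 0 \<le> x \<and> x < \<epsilon> \<longrightarrow> n0 x > 0"
    and n_ode: "\<forall>x\<ge>0. \<forall>t\<ge>0.
                 ((\<lambda>s. n x s) has_real_derivative (r x - d x) * n x t) (at t within {0..})"
    and n_init: "\<forall>x\<ge>0. n x 0 = n0 x"
  shows "(\<exists>lam>0. \<exists>C>0. \<forall>t\<ge>0. rho_C n t \<ge> C * exp (lam * t))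
         \<and> filterlim (rho_C n) at_top at_top
         \<and> (\<forall>\<phi>::real \<Rightarrow> real. continuous_on {0..} \<phi> \<and> bounded (\<phi> ` {0..}) \<longrightarrow>
              ((\<lambda>t. (LINT x:{0..}|lborel. \<phi> x * n x t) / rho_C n t) \<longlongrightarrow> \<phi> 0) at_top)"
proof -
  \<comment> \<open>Only the signs of the derivatives of \<open>r\<close> and \<open>d\<close> matter.\<close>
  define a where "a x = r x - d x" for x
  have "continuous_on {0..} r" "continuous_on {0..} d"
    using r_deriv d_deriv by (auto intro!: continuous_on_if_has_real_derivative_within)
  then have "continuous_on {0..} a"
    unfolding a_def by (intro continuous_intros)
  moreover have "a y < a x" if "0 \<le> x" "x < y" for x y
    unfolding a_def using r_deriv d_deriv that
    by (intro DERIV_within_signs_imp_diff_decreasing_atLeast) auto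
  ultimately interpret exp_tilted_mass n0 a
    using n0_nonneg n0_int n0_pos by unfold_locales auto
  have n_eq: "n x t = n0 x * exp (a x * t)" if "0 \<le> x" "0 \<le> t" for x t
    using linear_ode_solution_atLeast[of 0 "n x" "a x" t] n_ode n_init that unfolding a_def by auto
  have rho_mass: "rho_C n t = mass t" if "0 \<le> t" for t
    unfolding rho_C_def mass_def using that by (intro set_lebesgue_integral_cong) (auto simp: n_eq)
  have rho_eq: "\<forall>\<^sub>F t in at_top. mass t = rho_C n t"
    using eventually_ge_at_top[of 0] by (rule eventually_mono) (simp add: rho_mass)
  have "0 < a 0"
    unfolding a_def using r0_d0 by simp
  show ?thesis
  proof (intro conjI allI impI)
    show "\<exists>lam>0. \<exists>C>0. \<forall>t\<ge>0. C * exp (lam * t) \<le> rho_C n t"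
      using mass_exp_growth[OF \<open>0 < a 0\<close>] rho_mass by simp
    show "filterlim (rho_C n) at_top at_top"
      using filterlim_cong[OF refl refl rho_eq] mass_tendsto_at_top[OF \<open>0 < a 0\<close>] by simp
    fix \<phi> :: "real \<Rightarrow> real"
    assume "continuous_on {0..} \<phi> \<and> bounded (\<phi> ` {0..})"
    then have "((\<lambda>t. (LINT x:{0..}|lborel. \<phi> x * (n0 x * exp (a x * t))) / mass t) \<longlongrightarrow> \<phi> 0) at_top"
      by (intro normalized_tilted_mass_tendsto) auto
    moreover have "\<forall>\<^sub>F t in at_top. (LINT x:{0..}|lborel. \<phi> x * (n0 x * exp (a x * t))) / mass t
        = (LINT x:{0..}|lborel. \<phi> x * n x t) / rho_C n t"
      using rho_eq eventually_ge_at_top[of 0]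
      by eventually_elim (auto simp: n_eq intro: set_lebesgue_integral_cong)
    ultimately show "((\<lambda>t. (LINT x:{0..}|lborel. \<phi> x * n x t) / rho_C n t) \<longlongrightarrow> \<phi> 0) at_top"
      by (rule Lim_transform_eventually)
  qed
qed

end
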